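(* For all positive integers $m,n,m',n',a$ with $m+n=m'+n'$: (i) $\mathcal{F}(a,m,n)<\mathcal{F}(a,m',n')$ if and only if either $mn<m'n'$, or ($mn=m'n'$ and $m<n$); (ii) $\mathcal{F}(m,a,n)<\mathcal{F}(m',a,n')$ if and only if $mn<m'n'$.
   Context: $\mathcal{F}$ is defined on finite tuples of positive integers recursively: $\mathcal{F}(a)=1$ for every positive integer $a$; for $s\ge2$, $\mathcal{F}(a_1,\dots,a_s)=\sum_{i=1}^s\mathcal{F}(a_1,\dots,a_{i-1},a_i-1,a_{i+1},\dots,a_s)$, where a tuple with a zero entry is reduced by: $\mathcal{F}(0,a_2,\dots,a_t)=\mathcal{F}(a_2,\dots,a_t)$, $\mathcal{F}(a_1,\dots,a_t,0)=\mathcal{F}(a_1,\dots,a_t)$, and $\mathcal{F}(a_1,\dots,a_r,0,a_{r+2},\dots,a_s)=\mathcal{F}(a_1,\dots,a_{r-1},a_r+a_{r+2},a_{r+3},\dots,a_s)$. *)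

theory Defs
  imports Main
begin

definition dec_entry :: "nat list \<Rightarrow> nat \<Rightarrow> nat list" where
  "dec_entry xs i =
     (let b = xs ! i - 1 in
      if 0 < b then xs[i := b]
      else if i = 0 then tl xs
      else if i = length xs - 1 then butlast xs
      else take (i - 1) xs @ [xs ! (i - 1) + xs ! (i + 1)] @ drop (i + 2) xs)"

lemma sum_list_split3:
  assumes "0 < i" "i + 1 < length xs"
  shows "sum_list xs = sum_list (take (i - 1) xs) + xs ! (i - 1) + xs ! i + xs ! (i + 1) + sum_list (drop (i + 2) xs)"
proof -
  have "xs = take (i - 1) xs @ [xs ! (i - 1), xs ! i, xs ! (i+1)] @ drop (i + 2) xs"
    using assms
    by (metis (no_types) Cons_nth_drop_Suc Suc_1 Suc_diff_1 Suc_lessD add.commute add_Suc_right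
        append_Cons append_self_conv2 append_take_drop_id less_trans_Suc plus_1_eq_Suc)
  then have "sum_list xs = sum_list (take (i - 1) xs @ [xs ! (i - 1), xs ! i, xs ! (i+1)] @ drop (i + 2) xs)" by metis
  then show ?thesis by (simp add: algebra_simps)
qed

lemma dec_entry_decreases:
  assumes "i < length xs"
  shows "sum_list (dec_entry xs i) + length (dec_entry xs i) < sum_list xs + length xs"
proof (cases "0 < xs ! i - 1")
  case True
  then show ?thesis using assms
    using elem_le_sum_list[OF assms] by (simp add: dec_entry_def Let_def sum_list_update)
next
  case False
  show ?thesis
  proof (cases "i = 0")
    case True
    then show ?thesis using assms False
      by (cases xs) (auto simp: dec_entry_def Let_def)
  next
    case i0: False
    show ?thesis
    proof (cases "i = length xs - 1")
      case True
      have "xs = butlast xs @ [last xs]" using assms by (metis append_butlast_last_id less_zeroE list.size(3))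
      then have "sum_list xs = sum_list (butlast xs) + last xs"
        by (metis sum_list_append sum_list_simps add_0_right)
      then show ?thesis using assms False True i0
        by (auto simp: dec_entry_def Let_def)
    next
      case False2: False
      have i1: "i + 1 < length xs" using assms False2 by auto
      then show ?thesis using sum_list_split3[OF _ i1] i0 False False2 assms
        by (auto simp: dec_entry_def Let_def)
    qed
  qed
qed

function F :: "nat list \<Rightarrow> nat" where
  "F [] = 0"
| "F [a] = 1"
| "F (a # b # rest) =
     sum_list (map (\<lambda>i. F (dec_entry (a # b # rest) i)) [0..<length (a # b # rest)])"
  by pat_completeness auto
termination
proof (relation "measure (\<lambda>xs. sum_list xs + length xs)")
  show "wf (measure (\<lambda>xs. sum_list xs + length xs))" by simp
next
  fix a b :: nat and rest :: "nat list" and i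
  assume "i \<in> set [0..<length (a # b # rest)]"
  then have "i < length (a # b # rest)" by auto
  from dec_entry_decreases[OF this]
  show "(dec_entry (a # b # rest) i, a # b # rest) \<in> measure (\<lambda>xs. sum_list xs + length xs)"
    by (simp only: in_measure)
qed

end

(*
  Let T i j k = (i + j + k)! / (i! j! k!). Both T and F obey a Pascal-type recursion, and comparing
  the two identifies F [x, b + 1, z] with the sum of T i b j over the rectangle i \<le> x, j \<le> z; the
  merge of a vanishing middle entry supplies the base term T 0 0 0 = 1. A row of the rectangle has
  the closed form (i + b + 1) * (\<Sum>j\<le>z. T i b j) = (b + 1) * T i (b + 1) z, so comparing two
  rows comes down to comparing two trinomial coefficients, a ratio of small factors.

  (ii) The rectangle sum is symmetric in its two sides. Passing from sides (k, s - k) to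
  (k + 1, s - k - 1) adds a row and removes a column, and the row is larger while k + 1 < s - k;
  so F [m, a, n] increases with min m n, exactly as m * n does.
  (i) Row by row, F [a, k, s - k] < F [a, s - k, k] < F [a, k + 1, s - k - 1], which interleaves the
  two orders of every pair with the order of the products.
*)
theory Submission
  imports Defs
begin

definition trinomial :: "nat \<Rightarrow> nat \<Rightarrow> nat \<Rightarrow> nat" where
  "trinomial i j k = fact (i + j + k) div (fact i * fact j * fact k)"

lemma fact_eq_binomial_product:
  "fact (i + j + k) = (i + j choose i) * (i + j + k choose k) * (fact i * fact j * fact k :: nat)"
proof -
  have "fact i * fact j * (i + j choose i) = (fact (i + j) :: nat)"
    using binomial_fact_lemma[of i "i + j"] by simp
  moreover have "fact k * fact (i + j) * (i + j + k choose k) = (fact (i + j + k) :: nat)"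
    using binomial_fact_lemma[of k "i + j + k"] by (simp add: add.commute)
  ultimately show ?thesis
    by (metis mult.commute mult.left_commute)
qed

lemma trinomial_eq_binomial: "trinomial i j k = (i + j choose i) * (i + j + k choose k)"
  unfolding trinomial_def fact_eq_binomial_product by simp

lemma trinomial_fact: "trinomial i j k * (fact i * fact j * fact k) = fact (i + j + k)"
  by (simp add: trinomial_eq_binomial fact_eq_binomial_product)

lemma trinomial_commute:
  "trinomial i j k = trinomial j i k"
  "trinomial i j k = trinomial i k j"
  "trinomial i j k = trinomial k j i"
  by (simp_all add: trinomial_def ac_simps)

lemma trinomial_shift: "Suc i * trinomial (Suc i) j k = Suc k * trinomial i j (Suc k)"
proof -
  have "Suc i * trinomial (Suc i) j k * (fact i * fact j * fact k)
      = Suc k * trinomial i j (Suc k) * (fact i * fact j * fact k)"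
    using trinomial_fact[of "Suc i" j k] trinomial_fact[of i j "Suc k"]
    by (simp add: algebra_simps)
  then show ?thesis
    by simp
qed

lemma trinomial_pred_fact:
  "(if i = 0 then 0 else trinomial (i - 1) j k) * (fact i * fact j * fact k) = i * fact (i + j + k - 1)"
proof (cases i)
  case (Suc i')
  then show ?thesis
    using trinomial_fact[of i' j k] by (simp add: algebra_simps)
qed simp

lemma trinomial_rec:
  "trinomial i j k =
     (if i = 0 then 0 else trinomial (i - 1) j k) + (if j = 0 then 0 else trinomial i (j - 1) k)
     + (if k = 0 then 0 else trinomial i j (k - 1)) + (if i + j + k = 0 then 1 else 0)"
proof (cases "i + j + k = 0")
  case False
  let ?D = "fact i * fact j * fact k :: nat"
  have ti: "(if i = 0 then 0 else trinomial (i - 1) j k) * ?D = i * fact (i + j + k - 1)"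
    by (rule trinomial_pred_fact)
  have tj: "(if j = 0 then 0 else trinomial i (j - 1) k) * ?D = j * fact (i + j + k - 1)"
    using trinomial_pred_fact[of j i k] trinomial_commute(1)[of i "j - 1" k]
    by (cases "j = 0") (simp_all add: ac_simps)
  have tk: "(if k = 0 then 0 else trinomial i j (k - 1)) * ?D = k * fact (i + j + k - 1)"
    using trinomial_pred_fact[of k j i] trinomial_commute(3)[of i j "k - 1"]
    by (cases "k = 0") (simp_all add: ac_simps)
  have "trinomial i j k * ?D = fact (i + j + k)"
    by (rule trinomial_fact)
  also have "\<dots> = (i + j + k) * fact (i + j + k - 1)"
    using False by (cases "i + j + k") simp_all
  also have "\<dots> = ((if i = 0 then 0 else trinomial (i - 1) j k) + (if j = 0 then 0 else trinomial i (j - 1) k)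
      + (if k = 0 then 0 else trinomial i j (k - 1))) * ?D"
    unfolding distrib_right ti tj tk by (simp only: add_mult_distrib)
  finally show ?thesis
    using False by simp
qed (simp add: trinomial_def)

definition row_sum :: "nat \<Rightarrow> nat \<Rightarrow> nat \<Rightarrow> nat" where
  "row_sum i b z = (\<Sum>j\<le>z. trinomial i b j)"

definition rect_sum :: "nat \<Rightarrow> nat \<Rightarrow> nat \<Rightarrow> nat" where
  "rect_sum x b z = (\<Sum>i\<le>x. row_sum i b z)"

lemma row_sum_eq_binomial: "row_sum i b z = (i + b choose i) * (Suc (i + b + z) choose z)"
  unfolding row_sum_def trinomial_eq_binomial
  by (simp only: flip: sum_distrib_left sum_choose_lower)

lemma mult_row_sum_eq: "(i + Suc b) * row_sum i b z = Suc b * trinomial i (Suc b) z"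
proof -
  have "(i + Suc b) * (i + b choose i) = Suc b * (i + Suc b choose i)"
    using Suc_times_binomial[of i "i + b"] Suc_times_binomial_add[of i b] by simp
  then show ?thesis
    unfolding row_sum_eq_binomial trinomial_eq_binomial mult.assoc[symmetric] by simp
qed

lemma rect_sum_sym: "rect_sum x b z = rect_sum z b x"
  unfolding rect_sum_def row_sum_def
  by (subst sum.swap) (simp add: trinomial_commute(3)[of _ b])

lemma rect_sum_0_left: "rect_sum 0 b z = Suc (b + z) choose z"
  by (simp add: rect_sum_def row_sum_eq_binomial)

lemma rect_sum_Suc_left: "rect_sum (Suc x) b z = rect_sum x b z + row_sum (Suc x) b z"
  by (simp add: rect_sum_def)

lemma rect_sum_Suc_right: "rect_sum x b (Suc z) = rect_sum x b z + row_sum (Suc z) b x"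
  unfolding rect_sum_def row_sum_def
  by (simp add: sum.distrib trinomial_commute(3)[of _ b "Suc z"])

lemma rect_sum_rec:
  "rect_sum (Suc x) b (Suc z) =
     rect_sum x b (Suc z) + (if b = 0 then 1 else rect_sum (Suc x) (b - 1) (Suc z)) + rect_sum (Suc x) b z"
proof -
  let ?S = "\<lambda>f. \<Sum>i\<le>Suc x. \<Sum>j\<le>Suc z. f i j :: nat"
  have "rect_sum (Suc x) b (Suc z) = ?S (\<lambda>i j. trinomial i b j)"
    by (simp only: rect_sum_def row_sum_def)
  also have "\<dots> =
      ?S (\<lambda>i j. if i = 0 then 0 else trinomial (i - 1) b j) + ?S (\<lambda>i j. if b = 0 then 0 else trinomial i (b - 1) j)
      + ?S (\<lambda>i j. if j = 0 then 0 else trinomial i b (j - 1)) + ?S (\<lambda>i j. if i + b + j = 0 then 1 else 0)"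
    unfolding sum.distrib[symmetric] by (intro sum.cong refl) (rule trinomial_rec)
  also have "?S (\<lambda>i j. if i = 0 then 0 else trinomial (i - 1) b j) = rect_sum x b (Suc z)"
    by (simp add: rect_sum_def row_sum_def sum.atMost_Suc_shift del: sum.atMost_Suc)
  also have "?S (\<lambda>i j. if b = 0 then 0 else trinomial i (b - 1) j) = (if b = 0 then 0 else rect_sum (Suc x) (b - 1) (Suc z))"
    by (simp add: rect_sum_def row_sum_def)
  also have "?S (\<lambda>i j. if j = 0 then 0 else trinomial i b (j - 1)) = rect_sum (Suc x) b z"
    by (simp add: rect_sum_def row_sum_def sum.atMost_Suc_shift del: sum.atMost_Suc)
  also have "?S (\<lambda>i j. if i + b + j = 0 then 1 else 0) = (if b = 0 then 1 else 0)"
    by (simp add: sum.atMost_Suc_shift del: sum.atMost_Suc)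
  finally show ?thesis
    by simp
qed

lemma F_pair_rec: "F [x, y] = F (dec_entry [x, y] 0) + F (dec_entry [x, y] 1)"
proof -
  have "[0..<length [x, y]] = [0, 1]"
    by (simp add: upt_rec)
  then show ?thesis
    by simp
qed

lemma F_triple_rec:
  "F [x, y, z] = F (dec_entry [x, y, z] 0) + F (dec_entry [x, y, z] 1) + F (dec_entry [x, y, z] 2)"
proof -
  have "[0..<length [x, y, z]] = [0, 1, 2]"
    by (simp add: upt_rec)
  then show ?thesis
    by (simp add: numeral_2_eq_2)
qed

declare F.simps(3) [simp del]

lemma F_pair: "0 < p \<Longrightarrow> 0 < q \<Longrightarrow> F [p, q] = (p + q choose p)"
proof (induction "p + q" arbitrary: p q rule: less_induct)
  case less
  obtain p' q' where pq: "p = Suc p'" "q = Suc q'"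
    using less.prems by (metis gr0_implies_Suc)
  have "F (dec_entry [p, q] 0) = (p' + q choose p')"
    using less by (cases "p' = 0") (simp_all add: pq dec_entry_def)
  moreover have "F (dec_entry [p, q] 1) = (p + q' choose p)"
    using less by (cases "q' = 0") (simp_all add: pq dec_entry_def)
  ultimately show ?case
    using F_pair_rec[of p q] by (simp add: pq)
qed

lemma F_triple: "0 < x \<Longrightarrow> 0 < z \<Longrightarrow> F [x, Suc b, z] = rect_sum x b z"
proof (induction "x + b + z" arbitrary: x b z rule: less_induct)
  case less
  obtain x' z' where xz: "x = Suc x'" "z = Suc z'"
    using less.prems by (metis gr0_implies_Suc)
  have "F (dec_entry [x, Suc b, z] 0) = rect_sum x' b z"
  proof (cases "x' = 0")
    case True
    then show ?thesis
      using F_pair[of "Suc b" z] binomial_symmetric[of z "Suc b + z"]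
      by (simp add: xz dec_entry_def rect_sum_0_left)
  qed (use less in \<open>simp add: xz dec_entry_def\<close>)
  moreover have "F (dec_entry [x, Suc b, z] 1) = (if b = 0 then 1 else rect_sum x (b - 1) z)"
  proof (cases b)
    case (Suc b')
    then show ?thesis
      using less.hyps[of x b' z] less.prems by (simp add: dec_entry_def)
  qed (simp add: xz dec_entry_def)
  moreover have "F (dec_entry [x, Suc b, z] 2) = rect_sum x b z'"
  proof (cases "z' = 0")
    case True
    then show ?thesis
      using F_pair[of x "Suc b"] by (simp add: xz dec_entry_def rect_sum_sym[of _ b 0] rect_sum_0_left add.commute)
  qed (use less in \<open>simp add: xz dec_entry_def\<close>)
  ultimately show ?case
    using F_triple_rec[of x "Suc b" z] rect_sum_rec[of x' b z'] by (simp add: xz)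
qed

lemma less_of_mult_eq:
  fixes x y :: nat
  assumes "x * a = y * b" "b < a" "0 < y"
  shows "x < y"
  using assms by (metis mult_less_cancel2 nat_mult_less_cancel1)

lemma row_sum_pos: "0 < row_sum i b z"
  by (simp add: row_sum_eq_binomial)

lemma row_sum_Suc_swap_less:
  assumes "p < q" "0 < i"
  shows "row_sum i p (Suc q) < row_sum i q (Suc p)"
proof (rule less_of_mult_eq)
  let ?t = "trinomial i (Suc p) (Suc q)"
  have "row_sum i p (Suc q) * (Suc q * (i + Suc p)) = Suc q * ((i + Suc p) * row_sum i p (Suc q))"
    by (simp only: ac_simps)
  also have "\<dots> = Suc p * (Suc q * ?t)"
    unfolding mult_row_sum_eq by (simp only: ac_simps)
  also have "\<dots> = Suc p * ((i + Suc q) * row_sum i q (Suc p))"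
    by (simp only: mult_row_sum_eq trinomial_commute(2)[of i "Suc q"])
  also have "\<dots> = row_sum i q (Suc p) * (Suc p * (i + Suc q))"
    by (simp only: ac_simps)
  finally show "row_sum i p (Suc q) * (Suc q * (i + Suc p)) = row_sum i q (Suc p) * (Suc p * (i + Suc q))" .
  show "Suc p * (i + Suc q) < Suc q * (i + Suc p)"
    using assms by (simp add: algebra_simps)
qed (rule row_sum_pos)

lemma row_sum_swap_less:
  assumes "z < b"
  shows "row_sum i b z < row_sum i z b"
proof (rule less_of_mult_eq)
  have "(i + Suc b) * row_sum i b z = Suc b * trinomial i (Suc b) z"
    by (rule mult_row_sum_eq)
  also have "\<dots> = Suc z * trinomial i (Suc z) b"
    using trinomial_shift[of z i b] by (simp add: trinomial_commute(1)[of _ i] trinomial_commute(2)[of i])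
  also have "\<dots> = (i + Suc z) * row_sum i z b"
    by (rule mult_row_sum_eq[symmetric])
  finally show "row_sum i b z * (i + Suc b) = row_sum i z b * (i + Suc z)"
    by (simp only: ac_simps)
qed (use assms row_sum_pos in auto)

lemma row_sum_Suc_less:
  assumes "m < n"
  shows "row_sum (Suc n) b m < row_sum (Suc m) b n"
proof (rule less_of_mult_eq)
  let ?t = "trinomial (Suc n) (Suc b) m"
  have "row_sum (Suc n) b m * ((Suc n + Suc b) * Suc n) = Suc n * ((Suc n + Suc b) * row_sum (Suc n) b m)"
    by (simp only: ac_simps)
  also have "\<dots> = Suc b * (Suc n * ?t)"
    unfolding mult_row_sum_eq by (simp only: ac_simps)
  also have "\<dots> = Suc b * (Suc m * trinomial (Suc m) (Suc b) n)"
    using trinomial_shift[of m "Suc b" n] trinomial_commute(3)[of m "Suc b" "Suc n"] by simp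
  also have "\<dots> = Suc m * ((Suc m + Suc b) * row_sum (Suc m) b n)"
    unfolding mult_row_sum_eq by (simp only: ac_simps)
  also have "\<dots> = row_sum (Suc m) b n * ((Suc m + Suc b) * Suc m)"
    by (simp only: ac_simps)
  finally show "row_sum (Suc n) b m * ((Suc n + Suc b) * Suc n) = row_sum (Suc m) b n * ((Suc m + Suc b) * Suc m)" .
  show "(Suc m + Suc b) * Suc m < (Suc n + Suc b) * Suc n"
    using assms by (intro mult_strict_mono) auto
qed (rule row_sum_pos)

lemma strict_mono_on_atLeastAtMost_SucI:
  fixes f :: "nat \<Rightarrow> 'a::order"
  assumes "\<And>k. l \<le> k \<Longrightarrow> k < h \<Longrightarrow> f k < f (Suc k)"
  shows "strict_mono_on {l..h} f"
proof (rule strict_mono_onI)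
  fix r t
  assume "r \<in> {l..h}" "t \<in> {l..h}" "r < t"
  moreover have "f k < f (Suc k)" if "k \<in> {l..<h}" for k
    using assms that by simp
  ultimately show "f r < f t"
    using lift_Suc_mono_less_ivl[of "{l..<h}" f r t] by force
qed

lemma min_mem_half: "min m n \<in> {0..(m + n) div 2}" for m n :: nat
  by (auto simp: min_def)

lemma less_half_diff:
  fixes k s :: nat
  assumes "k < s div 2"
  obtains t where "s - k = Suc t" "s - Suc k = t" "k < t"
proof
  show "s - k = Suc (s - Suc k)" "k < s - Suc k"
    using assms by linarith+
qed simp

lemma mult_diff_strict_mono_on: "strict_mono_on {0..s div 2} (\<lambda>k::nat. k * (s - k))"
  by (rule strict_mono_on_atLeastAtMost_SucI) (elim less_half_diff, simp)

lemma mult_eq_min_mult: "m * n = min m n * (m + n - min m n)" for m n :: nat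
  by (cases "m \<le> n") (simp_all add: min_def)

lemma mult_less_mult_iff_min_less:
  fixes m n m' n' :: nat
  assumes "m + n = m' + n'"
  shows "m * n < m' * n' \<longleftrightarrow> min m n < min m' n'"
proof -
  have "m' * n' = min m' n' * ((m + n) - min m' n')"
    unfolding assms by (rule mult_eq_min_mult)
  then show ?thesis
    using strict_mono_on_less[OF mult_diff_strict_mono_on min_mem_half min_mem_half[of m' n', folded assms]]
    by (simp flip: mult_eq_min_mult)
qed

lemma rect_sum_strict_mono_on: "strict_mono_on {0..s div 2} (\<lambda>k. rect_sum k b (s - k))"
proof (rule strict_mono_on_atLeastAtMost_SucI)
  fix k
  assume "k < s div 2"
  then obtain t where "s - k = Suc t" "s - Suc k = t" "k < t"
    by (rule less_half_diff)
  then show "rect_sum k b (s - k) < rect_sum (Suc k) b (s - Suc k)"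
    using row_sum_Suc_less[of k t b] by (simp add: rect_sum_Suc_left rect_sum_Suc_right)
qed

lemma F_mid_eq_rect_sum_min:
  assumes "0 < m" "0 < n"
  shows "F [m, Suc b, n] = rect_sum (min m n) b (m + n - min m n)"
  using assms F_triple[of m n b] rect_sum_sym[of m b n] by (cases "m \<le> n") (simp_all add: min_def)

lemma F_mid_less_iff:
  assumes "0 < m" "0 < n" "0 < m'" "0 < n'" "0 < a" and sum: "m + n = m' + n'"
  shows "F [m, a, n] < F [m', a, n'] \<longleftrightarrow> m * n < m' * n'"
proof -
  obtain b where a: "a = Suc b"
    using assms(5) by (metis gr0_implies_Suc)
  have "F [m, a, n] < F [m', a, n'] \<longleftrightarrow>
      rect_sum (min m n) b (m + n - min m n) < rect_sum (min m' n') b (m + n - min m' n')"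
    using assms by (simp add: a F_mid_eq_rect_sum_min)
  also have "\<dots> \<longleftrightarrow> min m n < min m' n'"
    by (rule strict_mono_on_less[OF rect_sum_strict_mono_on min_mem_half min_mem_half[of m' n', folded sum]])
  also have "\<dots> \<longleftrightarrow> m * n < m' * n'"
    using mult_less_mult_iff_min_less[OF sum] by simp
  finally show ?thesis .
qed

lemma row_sum_0_swap: "row_sum 0 p (Suc q) = row_sum 0 q (Suc p)"
  using binomial_symmetric[of "Suc q" "Suc (Suc (p + q))"] by (simp add: row_sum_eq_binomial add.commute)

lemma F_end_swap_less:
  assumes "0 < a" "0 < m" "m < n"
  shows "F [a, m, n] < F [a, n, m]"
proof -
  obtain p q where pq: "m = Suc p" "n = Suc q" "p < q"
    using assms by (metis Suc_less_SucD gr0_implies_Suc less_trans)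
  have "(\<Sum>i\<le>a. row_sum i p (Suc q)) < (\<Sum>i\<le>a. row_sum i q (Suc p))"
  proof (rule sum_strict_mono_ex1)
    show "\<forall>i\<in>{..a}. row_sum i p (Suc q) \<le> row_sum i q (Suc p)"
      using row_sum_0_swap row_sum_Suc_swap_less[OF \<open>p < q\<close>] by (metis le_eq_less_or_eq neq0_conv)
    show "\<exists>i\<in>{..a}. row_sum i p (Suc q) < row_sum i q (Suc p)"
      using row_sum_Suc_swap_less[OF \<open>p < q\<close> assms(1)] by blast
  qed simp
  then show ?thesis
    using assms by (simp add: pq F_triple rect_sum_def)
qed

lemma F_end_swap_le: "0 < a \<Longrightarrow> 0 < m \<Longrightarrow> m \<le> n \<Longrightarrow> F [a, m, n] \<le> F [a, n, m]"
  using F_end_swap_less[of a m n] by (cases "m = n") simp_all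

lemma F_end_step:
  assumes "0 < a" "0 < m" "m < q"
  shows "F [a, Suc q, m] < F [a, Suc m, q]"
proof -
  have "(\<Sum>i\<le>a. row_sum i q m) < (\<Sum>i\<le>a. row_sum i m q)"
    using row_sum_swap_less[OF \<open>m < q\<close>] by (intro sum_strict_mono) auto
  then show ?thesis
    using assms by (simp add: F_triple rect_sum_def)
qed

lemma F_end_strict_mono_on:
  assumes "0 < a"
  shows "strict_mono_on {1..s div 2} (\<lambda>k. F [a, k, s - k])"
proof (rule strict_mono_on_atLeastAtMost_SucI)
  fix k
  assume "1 \<le> k" "k < s div 2"
  then obtain t where "s - k = Suc t" "s - Suc k = t" "k < t"
    by (elim less_half_diff)
  then show "F [a, k, s - k] < F [a, Suc k, s - Suc k]"
    using F_end_swap_less[of a k "Suc t"] F_end_step[of a k t] \<open>1 \<le> k\<close> assms by simp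
qed

lemma F_end_upper_less_lower:
  assumes "0 < a" "0 < k" "k < k'" "2 * k' \<le> s"
  shows "F [a, s - k, k] < F [a, k', s - k']"
proof -
  have "k < s div 2"
    using assms by linarith
  then obtain t where "s - k = Suc t" "s - Suc k = t" "k < t"
    by (rule less_half_diff)
  then have "F [a, s - k, k] < F [a, Suc k, s - Suc k]"
    using F_end_step[of a k t] assms by simp
  also have "\<dots> \<le> F [a, k', s - k']"
  proof -
    have "Suc k \<in> {1..s div 2}" "k' \<in> {1..s div 2}"
      using assms by simp_all
    then show ?thesis
      using strict_mono_on_less_eq[OF F_end_strict_mono_on[OF \<open>0 < a\<close>]] assms by simp
  qed
  finally show ?thesis .
qed

lemma F_end_min_bounds:
  assumes "0 < a" "0 < m" "0 < n" "m + n = s"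
  shows "F [a, min m n, s - min m n] \<le> F [a, m, n] \<and> F [a, m, n] \<le> F [a, s - min m n, min m n]"
proof (cases "m \<le> n")
  case True
  then have "min m n = m" "s - min m n = n"
    using assms(4) by auto
  then show ?thesis
    using F_end_swap_le[of a m n] assms True by simp
next
  case False
  then have "min m n = n" "s - min m n = m"
    using assms(4) by auto
  then show ?thesis
    using F_end_swap_le[of a n m] assms False by simp
qed

lemma F_end_less_iff:
  assumes "0 < m" "0 < n" "0 < m'" "0 < n'" "0 < a" and sum: "m + n = m' + n'" and "(m, n) \<noteq> (m', n')"
  shows "F [a, m, n] < F [a, m', n'] \<longleftrightarrow> m * n < m' * n' \<or> (m * n = m' * n' \<and> m < n)"
proof -
  define s k k' where "s = m + n" and "k = min m n" and "k' = min m' n'"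
  have bounds: "F [a, k, s - k] \<le> F [a, m, n]" "F [a, m, n] \<le> F [a, s - k, k]"
    "F [a, k', s - k'] \<le> F [a, m', n']" "F [a, m', n'] \<le> F [a, s - k', k']"
    using F_end_min_bounds[OF assms(5,1,2)] F_end_min_bounds[OF assms(5,3,4) sum[symmetric]]
    unfolding s_def k_def k'_def by simp_all
  have half: "0 < k" "0 < k'" "2 * k \<le> s" "2 * k' \<le> s"
    using assms unfolding s_def k_def k'_def by (auto simp: min_def)
  have prod: "m * n < m' * n' \<longleftrightarrow> k < k'" "m' * n' < m * n \<longleftrightarrow> k' < k"
    unfolding k_def k'_def using mult_less_mult_iff_min_less sum by metis+
  consider "k < k'" | "k' < k" | "k = k'"
    by linarith
  then show ?thesis
  proof cases
    case 1
    then have "F [a, m, n] < F [a, m', n']"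
      using bounds(2,3) F_end_upper_less_lower[of a k k' s] half assms by simp
    then show ?thesis
      using prod 1 by simp
  next
    case 2
    then have "F [a, m', n'] < F [a, m, n]"
      using bounds(1,4) F_end_upper_less_lower[of a k' k s] half assms by simp
    then show ?thesis
      using prod 2 by auto
  next
    case 3
    then have "m' = n" "n' = m" "m \<noteq> n"
      using sum assms(7) unfolding k_def k'_def by (auto simp: min_def split: if_splits)
    then show ?thesis
      using F_end_swap_less[of a m n] F_end_swap_less[of a n m] assms by (cases "m < n") auto
  qed
qed

theorem proposition5:
  fixes m n m' n' a :: nat
  assumes "0 < m" "0 < n" "0 < m'" "0 < n'" "0 < a"
    and "m + n = m' + n'"
  shows "((m, n) \<noteq> (m', n') \<longrightarrow>
           (F [a, m, n] < F [a, m', n'] \<longleftrightarrow> (m * n < m' * n' \<or> (m * n = m' * n' \<and> m < n))))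
       \<and> (F [m, a, n] < F [m', a, n'] \<longleftrightarrow> m * n < m' * n')"
  using F_end_less_iff[OF assms] F_mid_less_iff[OF assms] by blast

end
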